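(* Suppose (A1)–(A7) hold (see context). Let $\varpi^*=\mathrm{col}(\hat{\boldsymbol{x}}^*,\boldsymbol{z}^*,\boldsymbol{\lambda}^*,\boldsymbol{\mu}^* )\in\mathrm{zer}(\mathcal{A}+\mathcal{B})$ (equivalently $\varpi^*=\mathcal{T}\varpi^*$ with $\mathcal{T}$ as in the context). Then $\hat{\boldsymbol{x}}^*=\mathbf{1}_n\otimes\boldsymbol{x}^*$ for some $\boldsymbol{x}^*\in\mathbb{R}^q$, $\boldsymbol{\mu}^*=\mathbf{1}_m\otimes\mu^*$ for some $\mu^*\in\mathbb{R}^w$, and $$\mathbf{0}_{nq}\in R^T\boldsymbol{F}(\hat{\boldsymbol{x}}^* )+R^TH(R\hat{\boldsymbol{x}}^* )+R^T\boldsymbol{L}\boldsymbol{\lambda}^*+R^T\boldsymbol{\Lambda}^T\boldsymbol{\mu}^*,\quad \mathbf{0}_w\in b-\boldsymbol{A}R\hat{\boldsymbol{x}}^*+N_{\mathbb{R}^w_+}(\mu^* ),\quad \mathbf{0}=\boldsymbol{L}R\hat{\boldsymbol{x}}^*;$$ moreover $(\boldsymbol{x}^*,\boldsymbol{\lambda}^*,\mu^* )$ satisfies $$\mathbf{0}_q\in F(\boldsymbol{x}^* )+H(\boldsymbol{x}^* )+\boldsymbol{L}\boldsymbol{\lambda}^*+\boldsymbol{A}^T\mu^*,\quad \mathbf{0}_w\in b-\boldsymbol{A}\boldsymbol{x}^*+N_{\mathbb{R}^w_+}(\mu^* ),\quad \mathbf{0}_q=\boldsymbol{L}\boldsymbol{x}^*.$$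 Consequently $\boldsymbol{x}^*$ solves $\mathrm{GVI}(\Theta,\mathcal{K})$ and is a v-GNE of the multi-cluster game (both in the full-information and the partial-information formulation).
   Context: Setting. There are $m$ clusters; cluster $j$ has $n_j$ agents; agent $i$ of cluster $j$ chooses $x_i^j\in\mathbb{R}^{q_j}$; $x^j=\mathrm{col}(x_1^j,\dots,x_{n_j}^j)$, $\boldsymbol{x}=\mathrm{col}(x^1,\dots,x^m)\in\mathbb{R}^q$, $q=\sum_jn_jq_j$, $n=\sum_jn_j$; $\boldsymbol{x}^{-j}$ is $\boldsymbol{x}$ without block $x^j$. Agent cost $\theta_i^j=f_i^j(x^j,\boldsymbol{x}^{-j})+h_i^j(x_i^j)$, $f^j=\sum_if_i^j$, $h^j(x^j)=\sum_ih_i^j(x_i^j)$. Coupling: $A^j\in\mathbb{R}^{w\times q_j}$, $b^j\in\mathbb{R}^w$, $b=\sum_jb^j$, $\boldsymbol{A}^j=[A^j,\mathbf{0}_{w\times(n_jq_j-q_j)}]$, $\boldsymbol{A}=[\boldsymbol{A}^1,\dots,\boldsymbol{A}^m]$, $\boldsymbol{\Lambda}=\mathrm{blockdiag}(\boldsymbol{A}^1,\dots,\boldsymbol{A}^m)\in\mathbb{R}^{wm\times q}$, $\boldsymbol{b}=\mathrm{col}(b^1,\dots,b^m)$. Graphs: $\mathcal{G}^j$ undirected weighted graph on cluster $j$ with Laplacian $L^j$; $\mathcal{G}_L$ undirected weighted graph on the leaders (agent 1 of each cluster) with weights $w^{j,l}_{1,1}$ and Laplacian $L^0_m\in\mathbb{R}^{m\times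 m}$. $\boldsymbol{L}^j=L^j\otimes I_{q_j}$, $\boldsymbol{L}=\mathrm{blockdiag}(\boldsymbol{L}^j)\in\mathbb{R}^{q\times q}$, $L=\mathrm{blockdiag}(L^1,\dots,L^m)\in\mathbb{R}^{n\times n}$, $\hat{\boldsymbol{L}}=L\otimes I_q$, $\boldsymbol{L}^0_m=L^0_m\otimes I_w$; $\hat L^0_m\in\mathbb{R}^{n\times n}$ is partitioned into blocks of size $n_j\times n_l$, block $(j,l)$, $j\ne l$, having $(1,1)$ entry $-w^{j,l}_{1,1}$ and zeros elsewhere, block $(j,j)$ having $(1,1)$ entry $\sum_{l\ne j}w^{j,l}_{1,1}$ and zeros elsewhere; $\hat{\boldsymbol{L}}^0_m=\hat L^0_m\otimes I_q$. $s_2$, $s_{\max}$ denote second-smallest and largest eigenvalue. Feasible set $\mathcal{K}=\{\boldsymbol{x}\in\prod\Omega_i^j:\sum_jA^jx_1^j\le b,\ x_i^j=x_l^j\ \forall j,i,l\}$, $\Omega_i^j=\mathrm{dom}\,h_i^j$. $F(\boldsymbol{x})=\mathrm{col}(\nabla_{x^j}f^j(x^j,\boldsymbol{x}^{-j}))_j$, $H(\boldsymbol{x})=\partial h^1(x^1)\times\dots\times\partial h^m(x^m)$, $\Theta=F+H$; $\mathrm{GVI}(\Theta,\mathcal{K})$: find $\boldsymbol{x}^*\in\mathcal{K}$, $g\in\Theta(\boldsymbol{x}^* )$ with $\langle g,\boldsymbol{x}-\boldsymbol{x}^*\rangle\ge0\ \forall\boldsymbol{x}\in\mathcal{K}$;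 a v-GNE is a solution of this GVI. Partial information: agent $(j,i)$ holds an estimate $\hat{\boldsymbol{x}}_i^j\in\mathbb{R}^q$ of the whole profile whose cluster-$j$ block is the true $x^j$; $\hat{\boldsymbol{x}}=\mathrm{col}(\hat{\boldsymbol{x}}_i^j)\in\mathbb{R}^{nq}$ (ordered by $j$ then $i$); $\hat{\boldsymbol{x}}_i^{j,-j}$ is $\hat{\boldsymbol{x}}_i^j$ with the cluster-$j$ block removed; $R_i^j\in\mathbb{R}^{q_j\times q}$ extracts $x_i^j$ from $\hat{\boldsymbol{x}}_i^j$ and $R=\mathrm{blockdiag}(R_i^j)\in\mathbb{R}^{q\times nq}$, so $R\hat{\boldsymbol{x}}=\boldsymbol{x}$. Extended pseudo-gradient $\boldsymbol{F}(\hat{\boldsymbol{x}})=\mathrm{col}\big(\nabla_{x^j}\sum_if_i^j(x^j,\hat{\boldsymbol{x}}_i^{j,-j})\big)_j\in\mathbb{R}^q$. Operators: fix $c>0$ and positive step sizes $\rho_i^j,\tau_i^j,\sigma^j,\nu^j$; $\boldsymbol{\rho}=\mathrm{diag}(\rho_i^jI_q)$, $\boldsymbol{\sigma}=\mathrm{diag}(\sigma^jI_w)$, $\boldsymbol{\tau}=\mathrm{diag}(\tau_i^jI_{q_j})$, $\boldsymbol{\nu}=\mathrm{diag}(\nu^jI_w)$. Variable $\varpi=\mathrm{col}(\hat{\boldsymbol{x}},\boldsymbol{z},\boldsymbol{\lambda},\boldsymbol{\mu})\in\mathbb{R}^{nq}\times\mathbb{R}^{wm}\times\mathbb{R}^q\times\mathbb{R}^{wm}$.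 $\Psi=\mathrm{diag}(\boldsymbol{\rho}^{-1},\boldsymbol{\sigma}^{-1},\boldsymbol{\tau}^{-1},\boldsymbol{\nu}^{-1})$; $\Phi=\begin{bmatrix}0&0&R^T\boldsymbol{L}^T&R^T\boldsymbol{\Lambda}^T\\0&0&0&\boldsymbol{L}^0_m\\-\boldsymbol{L}R&0&0&0\\-\boldsymbol{\Lambda}R&-\boldsymbol{L}^0_m&0&0\end{bmatrix}$; $\mathcal{A}(\varpi)=\mathrm{col}(R^T\boldsymbol{F}(\hat{\boldsymbol{x}})+c(\hat{\boldsymbol{L}}+\hat{\boldsymbol{L}}^0_m)\hat{\boldsymbol{x}},\mathbf{0}_{wm},\mathbf{0}_q,\boldsymbol{b})+\Phi\varpi$; $\mathcal{B}(\varpi)=R^TH(R\hat{\boldsymbol{x}})\times\{\mathbf{0}_{wm}\}\times\{\mathbf{0}_q\}\times N_{\mathbb{R}^{wm}_+}(\boldsymbol{\mu})$, where $R^TH(R\hat{\boldsymbol{x}})=\{R^Tv:v\in H(R\hat{\boldsymbol{x}})\}$. $\mathcal{T}:=\Psi^{-1}\mathcal{A}+(\mathrm{Id}-\Psi^{-1}\mathcal{A})\circ(\mathrm{Id}+\Psi^{-1}\mathcal{B})^{-1}\circ(\mathrm{Id}-\Psi^{-1}\mathcal{A})$. Let $\ell_{\mathcal{A}}=\kappa+c(s_{\max}(L)+s_{\max}(L^0_m))+2s_{\max}(L)+2s_{\max}(L^0_m)+2\max_j\sigma_{\max}(A^j)$. Assumptions: (A1) each $f_i^j(\cdot,\boldsymbol{x}^{-j})$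 convex and $C^1$, each $h_i^j$ lsc convex with $\mathrm{dom}\,h_i^j$ nonempty compact convex; (A2) $\mathcal{K}$ nonempty, Slater's condition holds; (A3) every $\mathcal{G}^j$ and $\mathcal{G}_L$ connected; (A4) $F$ is $\eta$-strongly monotone and $\kappa_0$-Lipschitz; (A5) $\mathrm{GVI}(\Theta,\mathcal{K})$ has a solution; (A6) $\boldsymbol{F}$ is $\kappa$-Lipschitz; (A7) $\Psi\succ0$ and $\|\Psi^{-1}\|<1/\ell_{\mathcal{A}}$. *)

theory Defs
  imports "HOL-Analysis.Analysis"
begin

text \<open>
Clusters j < m; cluster j has n j agents i < n j (agent 0 is the leader, the paper's agent 1);
  agent (j,i) decides a vector in R^(qd j), coordinates k < qd j; coupling constraints have w rows.
  A profile x in R^q is a function on index triples (j,i,k) (only the index set PI matters).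
  An estimate profile xh in R^(nq) maps an agent (j,i) to its estimate in R^q.
  Vectors z, mu in R^(wm) are functions of (j,r), j < m, r < w; vectors in R^w are functions of r.
  Vectors in R^(qd j) are functions nat => real vanishing for k >= qd j.
\<close>

type_synonym prof = "nat \<times> nat \<times> nat \<Rightarrow> real"
type_synonym est = "nat \<times> nat \<Rightarrow> prof"
type_synonym cwvec = "nat \<times> nat \<Rightarrow> real"

definition PI :: "nat \<Rightarrow> (nat \<Rightarrow> nat) \<Rightarrow> (nat \<Rightarrow> nat) \<Rightarrow> (nat \<times> nat \<times> nat) set" where
  "PI m n qd = {(j,i,k). j < m \<and> i < n j \<and> k < qd j}"

definition Ag :: "nat \<Rightarrow> (nat \<Rightarrow> nat) \<Rightarrow> (nat \<times> nat) set" where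
  "Ag m n = {(j,i). j < m \<and> i < n j}"

definition CW :: "nat \<Rightarrow> nat \<Rightarrow> (nat \<times> nat) set" where
  "CW m w = {(j,r). j < m \<and> r < w}"

definition EI :: "nat \<Rightarrow> (nat \<Rightarrow> nat) \<Rightarrow> (nat \<Rightarrow> nat) \<Rightarrow> ((nat \<times> nat) \<times> (nat \<times> nat \<times> nat)) set" where
  "EI m n qd = Ag m n \<times> PI m n qd"

definition ip :: "'a set \<Rightarrow> ('a \<Rightarrow> real) \<Rightarrow> ('a \<Rightarrow> real) \<Rightarrow> real" where
  "ip I u v = (\<Sum>a\<in>I. u a * v a)"

definition vnorm :: "'a set \<Rightarrow> ('a \<Rightarrow> real) \<Rightarrow> real" where
  "vnorm I u = sqrt (\<Sum>a\<in>I. (u a)\<^sup>2)"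

definition flat :: "est \<Rightarrow> (nat \<times> nat) \<times> (nat \<times> nat \<times> nat) \<Rightarrow> real" where
  "flat xh = (\<lambda>(a,p). xh a p)"

definition ugraph :: "nat \<Rightarrow> (nat \<Rightarrow> nat \<Rightarrow> real) \<Rightarrow> bool" where
  "ugraph N W \<longleftrightarrow> (\<forall>i<N. \<forall>l<N. W i l \<ge> 0 \<and> W i l = W l i) \<and> (\<forall>i<N. W i i = 0)"

definition graph_connected :: "nat \<Rightarrow> (nat \<Rightarrow> nat \<Rightarrow> real) \<Rightarrow> bool" where
  "graph_connected N W \<longleftrightarrow>
     (\<forall>i<N. \<forall>l<N. (i,l) \<in> {(a,b). a < N \<and> b < N \<and> W a b > 0}\<^sup>*)"

definition lap :: "nat \<Rightarrow> (nat \<Rightarrow> nat \<Rightarrow> real) \<Rightarrow> nat \<Rightarrow> nat \<Rightarrow> real" where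
  "lap N W i l = (if i = l then (\<Sum>l'\<in>{..<N} - {i}. W i l') else - W i l)"

text \<open>Block-diagonal Laplacian L = blockdiag(L^1,...,L^m) on the agent set.\<close>
definition Lbig :: "(nat \<Rightarrow> nat) \<Rightarrow> (nat \<Rightarrow> nat \<Rightarrow> nat \<Rightarrow> real) \<Rightarrow> nat \<times> nat \<Rightarrow> nat \<times> nat \<Rightarrow> real" where
  "Lbig n W a b = (if fst a = fst b then lap (n (fst a)) (W (fst a)) (snd a) (snd b) else 0)"

text \<open>bold L = blockdiag(L^j \<otimes> I_{q_j}) on R^q\<close>
definition Lop :: "(nat \<Rightarrow> nat) \<Rightarrow> (nat \<Rightarrow> nat \<Rightarrow> nat \<Rightarrow> real) \<Rightarrow> prof \<Rightarrow> prof" where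
  "Lop n W v = (\<lambda>(j,i,k). \<Sum>l<n j. lap (n j) (W j) i l * v (j,l,k))"

definition LopT :: "(nat \<Rightarrow> nat) \<Rightarrow> (nat \<Rightarrow> nat \<Rightarrow> nat \<Rightarrow> real) \<Rightarrow> prof \<Rightarrow> prof" where
  "LopT n W v = (\<lambda>(j,i,k). \<Sum>l<n j. lap (n j) (W j) l i * v (j,l,k))"

text \<open>bold L^0_m = L^0_m \<otimes> I_w on R^(wm)\<close>
definition L0op :: "nat \<Rightarrow> (nat \<Rightarrow> nat \<Rightarrow> real) \<Rightarrow> cwvec \<Rightarrow> cwvec" where
  "L0op m WL u = (\<lambda>(j,r). \<Sum>l<m. lap m WL j l * u (l,r))"

text \<open>bold Lambda = blockdiag(bold A^1,...,bold A^m) : R^q \<rightarrow> R^(wm) and its transpose\<close>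
definition Lamop :: "(nat \<Rightarrow> nat) \<Rightarrow> (nat \<Rightarrow> nat \<Rightarrow> nat \<Rightarrow> real) \<Rightarrow> prof \<Rightarrow> cwvec" where
  "Lamop qd A x = (\<lambda>(j,r). \<Sum>k<qd j. A j r k * x (j,0,k))"

definition LamT :: "nat \<Rightarrow> (nat \<Rightarrow> nat \<Rightarrow> nat \<Rightarrow> real) \<Rightarrow> cwvec \<Rightarrow> prof" where
  "LamT w A u = (\<lambda>(j,i,k). if i = 0 then (\<Sum>r<w. A j r k * u (j,r)) else 0)"

text \<open>bold A = [bold A^1,...,bold A^m] : R^q \<rightarrow> R^w and its transpose\<close>
definition Aop :: "nat \<Rightarrow> (nat \<Rightarrow> nat) \<Rightarrow> (nat \<Rightarrow> nat \<Rightarrow> nat \<Rightarrow> real) \<Rightarrow> prof \<Rightarrow> nat \<Rightarrow> real" where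
  "Aop m qd A x = (\<lambda>r. \<Sum>j<m. \<Sum>k<qd j. A j r k * x (j,0,k))"

definition AT :: "nat \<Rightarrow> (nat \<Rightarrow> nat \<Rightarrow> nat \<Rightarrow> real) \<Rightarrow> (nat \<Rightarrow> real) \<Rightarrow> prof" where
  "AT w A u = (\<lambda>(j,i,k). if i = 0 then (\<Sum>r<w. A j r k * u r) else 0)"

definition bsum :: "nat \<Rightarrow> (nat \<Rightarrow> nat \<Rightarrow> real) \<Rightarrow> nat \<Rightarrow> real" where
  "bsum m b = (\<lambda>r. \<Sum>j<m. b j r)"

text \<open>R : R^(nq) \<rightarrow> R^q (R xh = x) and its transpose\<close>
definition Rop :: "est \<Rightarrow> prof" where
  "Rop xh = (\<lambda>(j,i,k). xh (j,i) (j,i,k))"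

definition RT :: "prof \<Rightarrow> est" where
  "RT v = (\<lambda>(j,i) (j',i',k). if j' = j \<and> i' = i then v (j,i,k) else 0)"

text \<open>hat L = L \<otimes> I_q and hat L^0_m = hat L^0_m \<otimes> I_q on R^(nq)\<close>
definition Lhat :: "(nat \<Rightarrow> nat) \<Rightarrow> (nat \<Rightarrow> nat \<Rightarrow> nat \<Rightarrow> real) \<Rightarrow> est \<Rightarrow> est" where
  "Lhat n W xh = (\<lambda>(j,i) p. \<Sum>l<n j. lap (n j) (W j) i l * xh (j,l) p)"

definition L0hat :: "nat \<Rightarrow> (nat \<Rightarrow> nat \<Rightarrow> real) \<Rightarrow> est \<Rightarrow> est" where
  "L0hat m WL xh = (\<lambda>(j,i) p. if i = 0 then (\<Sum>l<m. lap m WL j l * xh (l,0) p) else 0)"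

definition pd :: "(prof \<Rightarrow> real) \<Rightarrow> prof \<Rightarrow> nat \<times> nat \<times> nat \<Rightarrow> real" where
  "pd g x p = deriv (\<lambda>t. g (x(p := x p + t))) 0"

text \<open>Pseudo-gradient F(x) = col_j (nabla_{x^j} f^j(x^j, x^{-j})).\<close>
definition Fop :: "(nat \<Rightarrow> nat) \<Rightarrow> (nat \<Rightarrow> nat \<Rightarrow> prof \<Rightarrow> real) \<Rightarrow> prof \<Rightarrow> prof" where
  "Fop n f x = (\<lambda>(j,i,k). \<Sum>i'<n j. pd (f j i') x (j,i,k))"

text \<open>The profile (x^j, hat x_i^{j,-j}) with x^j the true action of cluster j.\<close>
definition estpt :: "est \<Rightarrow> nat \<Rightarrow> nat \<Rightarrow> prof" where
  "estpt xh j i = (\<lambda>(j',i',k). if j' = j then xh (j,i') (j,i',k) else xh (j,i) (j',i',k))"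

text \<open>Extended pseudo-gradient bold F(hat x) = col_j (nabla_{x^j} sum_i f_i^j(x^j, hat x_i^{j,-j})).\<close>
definition Fbold :: "(nat \<Rightarrow> nat) \<Rightarrow> (nat \<Rightarrow> nat \<Rightarrow> prof \<Rightarrow> real) \<Rightarrow> est \<Rightarrow> prof" where
  "Fbold n f xh = (\<lambda>(j,i,k). \<Sum>i'<n j. pd (f j i') (estpt xh j i') (j,i,k))"

definition blk :: "(nat \<Rightarrow> nat) \<Rightarrow> prof \<Rightarrow> nat \<Rightarrow> nat \<Rightarrow> nat \<Rightarrow> real" where
  "blk qd x j i = (\<lambda>k. if k < qd j then x (j,i,k) else 0)"

text \<open>h_i^j is the proper function equal to h j i on Omega j i and +infinity elsewhere.
  H(x) = dh^1(x^1) x ... x dh^m(x^m), h^j(x^j) = sum_i h_i^j(x_i^j), dom h^j = prod_i Omega_i^j.\<close>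
definition Hset :: "nat \<Rightarrow> (nat \<Rightarrow> nat) \<Rightarrow> (nat \<Rightarrow> nat) \<Rightarrow> (nat \<Rightarrow> nat \<Rightarrow> (nat \<Rightarrow> real) \<Rightarrow> real)
    \<Rightarrow> (nat \<Rightarrow> nat \<Rightarrow> (nat \<Rightarrow> real) set) \<Rightarrow> prof \<Rightarrow> prof set" where
  "Hset m n qd h \<Omega> x = {g. \<forall>j<m.
      (\<forall>i<n j. blk qd x j i \<in> \<Omega> j i) \<and>
      (\<forall>y. (\<forall>i<n j. blk qd y j i \<in> \<Omega> j i) \<longrightarrow>
          (\<Sum>i<n j. h j i (blk qd y j i)) \<ge> (\<Sum>i<n j. h j i (blk qd x j i))
             + (\<Sum>i<n j. \<Sum>k<qd j. g (j,i,k) * (y (j,i,k) - x (j,i,k))))}"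

definition normal_cone :: "'a set \<Rightarrow> ('a \<Rightarrow> real) set \<Rightarrow> ('a \<Rightarrow> real) \<Rightarrow> ('a \<Rightarrow> real) set" where
  "normal_cone I C u = {v. u \<in> C \<and> (\<forall>y\<in>C. (\<Sum>a\<in>I. v a * (y a - u a)) \<le> 0)}"

definition orthant :: "'a set \<Rightarrow> ('a \<Rightarrow> real) set" where
  "orthant I = {u. \<forall>a\<in>I. u a \<ge> 0}"

definition Kset :: "nat \<Rightarrow> (nat \<Rightarrow> nat) \<Rightarrow> (nat \<Rightarrow> nat) \<Rightarrow> nat \<Rightarrow> (nat \<Rightarrow> nat \<Rightarrow> nat \<Rightarrow> real)
    \<Rightarrow> (nat \<Rightarrow> nat \<Rightarrow> real) \<Rightarrow> (nat \<Rightarrow> nat \<Rightarrow> (nat \<Rightarrow> real) set) \<Rightarrow> prof set" where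
  "Kset m n qd w A b \<Omega> = {x.
      (\<forall>j<m. \<forall>i<n j. blk qd x j i \<in> \<Omega> j i) \<and>
      (\<forall>r<w. Aop m qd A x r \<le> bsum m b r) \<and>
      (\<forall>j<m. \<forall>i<n j. \<forall>l<n j. blk qd x j i = blk qd x j l)}"

definition GVI_sol :: "nat \<Rightarrow> (nat \<Rightarrow> nat) \<Rightarrow> (nat \<Rightarrow> nat) \<Rightarrow> (prof \<Rightarrow> prof) \<Rightarrow> (prof \<Rightarrow> prof set)
    \<Rightarrow> prof set \<Rightarrow> prof \<Rightarrow> bool" where
  "GVI_sol m n qd F H K xs \<longleftrightarrow> xs \<in> K \<and>
     (\<exists>g\<in>H xs. \<forall>x\<in>K. ip (PI m n qd) (\<lambda>p. F xs p + g p) (\<lambda>p. x p - xs p) \<ge> 0)"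

text \<open>A v-GNE of the multi-cluster game is, by definition, a solution of GVI(Theta,K).\<close>
definition vGNE :: "nat \<Rightarrow> (nat \<Rightarrow> nat) \<Rightarrow> (nat \<Rightarrow> nat) \<Rightarrow> nat \<Rightarrow> (nat \<Rightarrow> nat \<Rightarrow> prof \<Rightarrow> real)
    \<Rightarrow> (nat \<Rightarrow> nat \<Rightarrow> (nat \<Rightarrow> real) \<Rightarrow> real) \<Rightarrow> (nat \<Rightarrow> nat \<Rightarrow> (nat \<Rightarrow> real) set)
    \<Rightarrow> (nat \<Rightarrow> nat \<Rightarrow> nat \<Rightarrow> real) \<Rightarrow> (nat \<Rightarrow> nat \<Rightarrow> real) \<Rightarrow> prof \<Rightarrow> bool" where
  "vGNE m n qd w f h \<Omega> A b xs \<longleftrightarrow>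
     GVI_sol m n qd (Fop n f) (Hset m n qd h \<Omega>) (Kset m n qd w A b \<Omega>) xs"

definition vec_of_dim :: "nat \<Rightarrow> (nat \<Rightarrow> real) set" where
  "vec_of_dim d = {v. \<forall>k\<ge>d. v k = 0}"

definition convex_set :: "(nat \<Rightarrow> real) set \<Rightarrow> bool" where
  "convex_set S \<longleftrightarrow> (\<forall>x\<in>S. \<forall>y\<in>S. \<forall>t::real. 0 \<le> t \<and> t \<le> 1 \<longrightarrow> (\<lambda>k. t * x k + (1 - t) * y k) \<in> S)"

definition convex_fun_on :: "(nat \<Rightarrow> real) set \<Rightarrow> ((nat \<Rightarrow> real) \<Rightarrow> real) \<Rightarrow> bool" where
  "convex_fun_on S g \<longleftrightarrow> (\<forall>x\<in>S. \<forall>y\<in>S. \<forall>t::real. 0 \<le> t \<and> t \<le> 1 \<longrightarrow>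
      g (\<lambda>k. t * x k + (1 - t) * y k) \<le> t * g x + (1 - t) * g y)"

definition ext_fun :: "('a \<Rightarrow> real) set \<Rightarrow> (('a \<Rightarrow> real) \<Rightarrow> real) \<Rightarrow> ('a \<Rightarrow> real) \<Rightarrow> ereal" where
  "ext_fun S g v = (if v \<in> S then ereal (g v) else \<infinity>)"

definition lsc_ext :: "(nat \<Rightarrow> real) set \<Rightarrow> ((nat \<Rightarrow> real) \<Rightarrow> real) \<Rightarrow> bool" where
  "lsc_ext S g \<longleftrightarrow> (\<forall>x s. s \<longlonglongrightarrow> x \<longrightarrow> ext_fun S g x \<le> liminf (\<lambda>k. ext_fun S g (s k)))"

definition aff_hull :: "(nat \<Rightarrow> real) set \<Rightarrow> (nat \<Rightarrow> real) set" where
  "aff_hull S = {v. \<exists>T u. finite T \<and> T \<subseteq> S \<and> sum u T = 1 \<and> v = (\<lambda>k. \<Sum>t\<in>T. u t * t k)}"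

definition rel_int :: "nat \<Rightarrow> (nat \<Rightarrow> real) set \<Rightarrow> (nat \<Rightarrow> real) set" where
  "rel_int d S = {x\<in>S. \<exists>e>0. \<forall>y\<in>aff_hull S. vnorm {..<d} (\<lambda>k. y k - x k) < e \<longrightarrow> y \<in> S}"

definition eigvals :: "'a set \<Rightarrow> ('a \<Rightarrow> 'a \<Rightarrow> real) \<Rightarrow> real set" where
  "eigvals I M = {e. \<exists>v. (\<exists>a\<in>I. v a \<noteq> 0) \<and> (\<forall>a\<in>I. (\<Sum>b\<in>I. M a b * v b) = e * v a)}"

definition smax :: "'a set \<Rightarrow> ('a \<Rightarrow> 'a \<Rightarrow> real) \<Rightarrow> real" where
  "smax I M = Max (eigvals I M)"

definition sigmax :: "nat \<Rightarrow> nat \<Rightarrow> (nat \<Rightarrow> nat \<Rightarrow> real) \<Rightarrow> real" where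
  "sigmax w d Aj = sqrt (smax {..<d} (\<lambda>k k'. \<Sum>r<w. Aj r k * Aj r k'))"

text \<open>spectral norm of Psi^{-1} = diag(rho, sigma, tau, nu)\<close>
definition psi_inv_norm :: "nat \<Rightarrow> (nat \<Rightarrow> nat) \<Rightarrow> (nat \<Rightarrow> nat) \<Rightarrow> nat
    \<Rightarrow> (nat \<Rightarrow> nat \<Rightarrow> real) \<Rightarrow> (nat \<Rightarrow> real) \<Rightarrow> (nat \<Rightarrow> nat \<Rightarrow> real) \<Rightarrow> (nat \<Rightarrow> real) \<Rightarrow> real" where
  "psi_inv_norm m n qd w \<rho> \<sigma> \<tau> \<nu> = Sup {sqrt (
        (\<Sum>(a,p)\<in>EI m n qd. (\<rho> (fst a) (snd a) * xh a p)\<^sup>2)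
      + (\<Sum>(j,r)\<in>CW m w. (\<sigma> j * z (j,r))\<^sup>2)
      + (\<Sum>(j,i,k)\<in>PI m n qd. (\<tau> j i * lam (j,i,k))\<^sup>2)
      + (\<Sum>(j,r)\<in>CW m w. (\<nu> j * mu (j,r))\<^sup>2)) | xh z lam mu.
      (\<Sum>(a,p)\<in>EI m n qd. (xh a p)\<^sup>2) + (\<Sum>c\<in>CW m w. (z c)\<^sup>2)
      + (\<Sum>p\<in>PI m n qd. (lam p)\<^sup>2) + (\<Sum>c\<in>CW m w. (mu c)\<^sup>2) = 1}"

definition ellA :: "nat \<Rightarrow> (nat \<Rightarrow> nat) \<Rightarrow> (nat \<Rightarrow> nat) \<Rightarrow> nat \<Rightarrow> (nat \<Rightarrow> nat \<Rightarrow> nat \<Rightarrow> real)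
    \<Rightarrow> (nat \<Rightarrow> nat \<Rightarrow> real) \<Rightarrow> (nat \<Rightarrow> nat \<Rightarrow> nat \<Rightarrow> real) \<Rightarrow> real \<Rightarrow> real \<Rightarrow> real" where
  "ellA m n qd w W WL A \<kappa> c = \<kappa> + c * (smax (Ag m n) (Lbig n W) + smax {..<m} (lap m WL))
     + 2 * smax (Ag m n) (Lbig n W) + 2 * smax {..<m} (lap m WL)
     + 2 * Max ((\<lambda>j. sigmax w (qd j) (A j)) ` {..<m})"

end

theory Submission
  imports Defs
begin

text \<open>At a zero of \<open>\<A> + \<B>\<close>, a coordinate p of the estimates enters the first block only in the
  row of its owner through \<open>R\<^sup>T\<close>; in all other rows it satisfies \<open>(L + \<hat>L\<^sup>0\<^sub>m) \<hat>x = 0\<close>.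
  All row sums of this Laplacian vanish, so the owner's row vanishes as well, and its quadratic form
  (the cluster Laplacians plus the leader Laplacian) forces consensus of all estimates when the
  cluster graphs and the leader graph are connected. In the same way \<open>L\<^sup>0\<^sub>m \<mu> = 0\<close> gives a common
  multiplier. Summing the leader equations over the clusters cancels \<open>z\<close> and leaves the KKT system
  of the GVI. A KKT point solves the GVI: \<open>L\<lambda>\<close> is orthogonal to cluster-wise consensus, and by
  complementary slackness the multiplier term is \<open>\<mu>\<^sup>T(Ax - b) \<le> 0\<close>.\<close>

section \<open>Graph Laplacians\<close>

lemma lap_sym:
  assumes "ugraph N W" "i < N" "l < N"
  shows "lap N W i l = lap N W l i"
  using assms by (auto simp: lap_def ugraph_def)

lemma lap_mult_sum_eq:
  assumes "i < N"
  shows "(\<Sum>l<N. lap N W i l * u l) = (\<Sum>l<N. W i l * (u i - u l))"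
proof -
  have "(\<Sum>l<N. lap N W i l * u l) = lap N W i i * u i + (\<Sum>l\<in>{..<N}-{i}. lap N W i l * u l)"
    using assms by (simp add: sum.remove)
  also have "\<dots> = (\<Sum>l\<in>{..<N}-{i}. W i l * u i) + (\<Sum>l\<in>{..<N}-{i}. - W i l * u l)"
    by (simp add: lap_def sum_distrib_right)
  also have "\<dots> = (\<Sum>l\<in>{..<N}-{i}. W i l * (u i - u l))"
    by (simp add: sum.distrib[symmetric] algebra_simps)
  also have "\<dots> = (\<Sum>l<N. W i l * (u i - u l))"
    using assms by (simp add: sum.remove)
  finally show ?thesis .
qed

lemma lap_mult_const:
  assumes "i < N"
  shows "(\<Sum>l<N. lap N W i l * c) = 0"
  using lap_mult_sum_eq[OF assms, of W "\<lambda>_. c"] by simp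

lemma sum_lap_mult_eq_0:
  assumes "ugraph N W"
  shows "(\<Sum>i<N. \<Sum>l<N. lap N W i l * u l) = 0"
proof -
  have "(\<Sum>i<N. \<Sum>l<N. lap N W i l * u l) = (\<Sum>l<N. \<Sum>i<N. lap N W l i * u l)"
    by (subst sum.swap) (auto intro!: sum.cong simp: lap_sym[OF assms])
  then show ?thesis
    by (simp add: lap_mult_const)
qed

lemma lap_quadratic_form:
  assumes "ugraph N W"
  shows "(\<Sum>i<N. u i * (\<Sum>l<N. lap N W i l * u l)) = (\<Sum>i<N. \<Sum>l<N. W i l * (u i - u l)\<^sup>2) / 2"
proof -
  let ?S = "\<Sum>i<N. \<Sum>l<N. W i l * u i * (u i - u l)"
  have "(\<Sum>i<N. u i * (\<Sum>l<N. lap N W i l * u l)) = ?S"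
    by (auto simp: lap_mult_sum_eq sum_distrib_left mult.assoc mult.left_commute intro!: sum.cong)
  moreover have swap: "?S = (\<Sum>i<N. \<Sum>l<N. W i l * u l * (u l - u i))"
    using assms by (subst sum.swap) (auto simp: ugraph_def intro!: sum.cong)
  have "?S + ?S = (\<Sum>i<N. \<Sum>l<N. W i l * (u i - u l)\<^sup>2)"
    by (subst (2) swap) (simp add: sum.distrib[symmetric] power2_eq_square algebra_simps)
  ultimately show ?thesis
    by simp
qed

lemma lap_quadratic_form_nonneg:
  assumes "ugraph N W"
  shows "0 \<le> (\<Sum>i<N. u i * (\<Sum>l<N. lap N W i l * u l))"
  using assms unfolding lap_quadratic_form[OF assms] ugraph_def
  by (auto intro!: sum_nonneg)

lemma lap_quadratic_form_eq_0_imp_const: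
  assumes graph: "ugraph N W" and conn: "graph_connected N W"
    and zero: "(\<Sum>i<N. u i * (\<Sum>l<N. lap N W i l * u l)) = 0"
    and "i < N" "l < N"
  shows "u i = u l"
proof -
  have nonneg: "\<forall>e\<in>{..<N} \<times> {..<N}. 0 \<le> W (fst e) (snd e) * (u (fst e) - u (snd e))\<^sup>2"
    using graph by (auto simp: ugraph_def)
  have "(\<Sum>e\<in>{..<N} \<times> {..<N}. W (fst e) (snd e) * (u (fst e) - u (snd e))\<^sup>2) = 0"
    using zero by (simp add: lap_quadratic_form[OF graph] sum.cartesian_product case_prod_beta)
  then have "\<forall>e\<in>{..<N} \<times> {..<N}. W (fst e) (snd e) * (u (fst e) - u (snd e))\<^sup>2 = 0"
    using nonneg by (simp add: sum_nonneg_eq_0_iff)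
  then have "\<forall>a<N. \<forall>b<N. W a b = 0 \<or> u a = u b"
    by auto
  then have edge: "u a = u b" if "(a, b) \<in> {(a, b). a < N \<and> b < N \<and> W a b > 0}" for a b
    using that by force
  have "u a = u b" if "(a, b) \<in> {(a, b). a < N \<and> b < N \<and> W a b > 0}\<^sup>*" for a b
    using that by (induction rule: rtrancl_induct) (auto simp: edge)
  then show ?thesis
    using conn \<open>i < N\<close> \<open>l < N\<close> by (auto simp: graph_connected_def)
qed

lemma lap_kernel_const:
  assumes "ugraph N W" "graph_connected N W" "\<forall>i<N. (\<Sum>l<N. lap N W i l * u l) = 0"
    and "i < N" "l < N"
  shows "u i = u l"
  using assms by (intro lap_quadratic_form_eq_0_imp_const) auto

section \<open>The combined cluster and leader Laplacian\<close>

text \<open>Row (j,i) of \<open>L + \<hat>L\<^sup>0\<^sub>m\<close> applied to a vector u indexed by agents.\<close>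
definition mc_lap :: "nat \<Rightarrow> (nat \<Rightarrow> nat) \<Rightarrow> (nat \<Rightarrow> nat \<Rightarrow> nat \<Rightarrow> real) \<Rightarrow> (nat \<Rightarrow> nat \<Rightarrow> real)
    \<Rightarrow> (nat \<Rightarrow> nat \<Rightarrow> real) \<Rightarrow> nat \<Rightarrow> nat \<Rightarrow> real" where
  "mc_lap m n W WL u j i = (\<Sum>l<n j. lap (n j) (W j) i l * u j l)
     + (if i = 0 then \<Sum>l<m. lap m WL j l * u l 0 else 0)"

lemma Ag_eq_Sigma: "Ag m n = (SIGMA j:{..<m}. {..<n j})"
  by (auto simp: Ag_def)

lemma finite_Ag: "finite (Ag m n)"
  by (simp add: Ag_eq_Sigma)

lemma sum_Ag: "(\<Sum>a\<in>Ag m n. F a) = (\<Sum>j<m. \<Sum>i<n j. F (j, i))"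
  by (simp add: Ag_eq_Sigma sum.Sigma)

lemma mc_lap_const:
  assumes "\<forall>j<m. \<forall>i<n j. u j i = c" "\<forall>j<m. 0 < n j" "j < m" "i < n j"
  shows "mc_lap m n W WL u j i = 0"
proof -
  have "mc_lap m n W WL u j i = mc_lap m n W WL (\<lambda>_ _. c) j i"
    using assms by (simp add: mc_lap_def)
  then show ?thesis
    using assms(3,4) by (simp add: mc_lap_def lap_mult_const)
qed

lemma sum_mc_lap_eq_0:
  assumes graphs: "\<forall>j<m. ugraph (n j) (W j)" "ugraph m WL" and nonempty: "\<forall>j<m. 0 < n j"
  shows "(\<Sum>j<m. \<Sum>i<n j. mc_lap m n W WL u j i) = 0"
  using assms by (simp add: mc_lap_def sum.distrib sum.delta sum_lap_mult_eq_0)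

lemma mc_lap_quadratic_form:
  assumes "\<forall>j<m. 0 < n j"
  shows "(\<Sum>j<m. \<Sum>i<n j. u j i * mc_lap m n W WL u j i)
    = (\<Sum>j<m. \<Sum>i<n j. u j i * (\<Sum>l<n j. lap (n j) (W j) i l * u j l))
      + (\<Sum>j<m. u j 0 * (\<Sum>l<m. lap m WL j l * u l 0))"
proof -
  have "u j i * mc_lap m n W WL u j i = u j i * (\<Sum>l<n j. lap (n j) (W j) i l * u j l)
      + (if i = 0 then u j 0 * (\<Sum>l<m. lap m WL j l * u l 0) else 0)" for j i
    by (simp add: mc_lap_def distrib_left)
  then show ?thesis
    using assms by (simp add: sum.distrib sum.delta)
qed

lemma mc_lap_kernel_const:
  assumes graphs: "\<forall>j<m. ugraph (n j) (W j)" "ugraph m WL"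
    and conn: "\<forall>j<m. graph_connected (n j) (W j)" "graph_connected m WL"
    and nonempty: "\<forall>j<m. 0 < n j"
    and zero: "\<forall>j<m. \<forall>i<n j. mc_lap m n W WL u j i = 0"
    and "j < m" "i < n j"
  shows "u j i = u 0 0"
proof -
  define Q where "Q j = (\<Sum>i<n j. u j i * (\<Sum>l<n j. lap (n j) (W j) i l * u j l))" for j
  define Q0 where "Q0 = (\<Sum>j<m. u j 0 * (\<Sum>l<m. lap m WL j l * u l 0))"
  have "(\<Sum>j<m. Q j) + Q0 = 0"
    using mc_lap_quadratic_form[OF nonempty, of u W WL] zero by (simp add: Q_def Q0_def)
  moreover have Q_nonneg: "\<forall>j\<in>{..<m}. 0 \<le> Q j"
    using graphs(1) by (simp add: Q_def lap_quadratic_form_nonneg)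
  moreover have "0 \<le> Q0"
    using lap_quadratic_form_nonneg[OF graphs(2)] by (simp add: Q0_def)
  moreover have "0 \<le> (\<Sum>j<m. Q j)"
    by (rule sum_nonneg) (use Q_nonneg in blast)
  ultimately have "(\<Sum>j<m. Q j) = 0" "Q0 = 0"
    by linarith+
  then have "Q j = 0"
    using sum_nonneg_eq_0_iff[of "{..<m}" Q] Q_nonneg \<open>j < m\<close> by simp
  moreover have cluster: "ugraph (n j) (W j)" "graph_connected (n j) (W j)" "0 < n j"
    using graphs(1) conn(1) nonempty \<open>j < m\<close> by auto
  ultimately have "u j i = u j 0"
    unfolding Q_def using lap_quadratic_form_eq_0_imp_const[OF cluster(1,2)] \<open>i < n j\<close> by blast
  also have "\<dots> = u 0 0"
    using \<open>Q0 = 0\<close> unfolding Q0_def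
    by (rule lap_quadratic_form_eq_0_imp_const[OF graphs(2) conn(2)]) (use \<open>j < m\<close> in auto)
  finally show ?thesis .
qed

text \<open>Every row sum of \<open>L + \<hat>L\<^sup>0\<^sub>m\<close> vanishes, so a single row is determined by the others.\<close>
lemma mc_lap_kernel_const_but_one:
  assumes graphs: "\<forall>j<m. ugraph (n j) (W j)" "ugraph m WL"
    and conn: "\<forall>j<m. graph_connected (n j) (W j)" "graph_connected m WL"
    and nonempty: "\<forall>j<m. 0 < n j"
    and zero: "\<forall>j<m. \<forall>i<n j. (j, i) \<noteq> a0 \<longrightarrow> mc_lap m n W WL u j i = 0"
    and "j < m" "i < n j"
  shows "u j i = u 0 0"
proof (rule mc_lap_kernel_const[OF graphs conn nonempty _ assms(7,8)])
  let ?T = "\<lambda>a. mc_lap m n W WL u (fst a) (snd a)"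
  have others: "\<forall>a\<in>Ag m n - {a0}. ?T a = 0"
  proof
    fix a assume "a \<in> Ag m n - {a0}"
    then show "?T a = 0"
      using zero by (cases a) (auto simp: Ag_def)
  qed
  have "\<forall>a\<in>Ag m n. ?T a = 0"
  proof (cases "a0 \<in> Ag m n")
    case True
    have "(\<Sum>a\<in>Ag m n. ?T a) = 0"
      using sum_mc_lap_eq_0[OF graphs nonempty] by (simp add: sum_Ag)
    then have "?T a0 = 0"
      using sum.remove[OF finite_Ag True, of ?T] others by simp
    then show ?thesis
      using others by blast
  next
    case False
    then show ?thesis
      using others by blast
  qed
  then show "\<forall>j<m. \<forall>i<n j. mc_lap m n W WL u j i = 0"
    by (auto simp: Ag_def)
qed

section \<open>From a zero of \<open>\<A> + \<B>\<close> to the KKT system\<close>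

lemma Lhat_L0hat_eq_mc_lap:
  "Lhat n W xh (j, i) p + L0hat m WL xh (j, i) p = mc_lap m n W WL (\<lambda>j i. xh (j, i) p) j i"
  by (simp add: Lhat_def L0hat_def mc_lap_def)

lemma estimates_consensus:
  assumes graphs: "\<forall>j<m. ugraph (n j) (W j)" "ugraph m WL"
    and conn: "\<forall>j<m. graph_connected (n j) (W j)" "graph_connected m WL"
    and nonempty: "\<forall>j<m. 0 < n j" and "c \<noteq> 0"
    and eq: "\<forall>(a, p)\<in>EI m n qd. c * (Lhat n W xh a p + L0hat m WL xh a p) + RT v a p = 0"
    and "(a, p) \<in> EI m n qd"
  shows "xh a p = xh (0, 0) p"
proof -
  obtain j i where a: "a = (j, i)" "j < m" "i < n j" and "p \<in> PI m n qd"
    using \<open>(a, p) \<in> EI m n qd\<close> by (auto simp: EI_def Ag_def)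
  obtain j' i' k where p: "p = (j', i', k)"
    by (cases p) auto
  have "mc_lap m n W WL (\<lambda>j i. xh (j, i) p) jj ii = 0"
    if "jj < m" "ii < n jj" "(jj, ii) \<noteq> (j', i')" for jj ii
  proof -
    have "((jj, ii), p) \<in> EI m n qd"
      using that \<open>p \<in> PI m n qd\<close> by (simp add: EI_def Ag_def)
    moreover have "RT v (jj, ii) p = 0"
      using that(3) by (auto simp: RT_def p)
    ultimately show ?thesis
      using eq \<open>c \<noteq> 0\<close> by (fastforce simp: Lhat_L0hat_eq_mc_lap)
  qed
  then show ?thesis
    using mc_lap_kernel_const_but_one[OF graphs conn nonempty, of "(j', i')"] a by blast
qed

lemma Hset_cong:
  assumes "\<forall>p\<in>PI m n qd. x p = y p"
  shows "Hset m n qd h \<Omega> x = Hset m n qd h \<Omega> y"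
proof -
  have "x (j, i, k) = y (j, i, k)" if "j < m" "i < n j" "k < qd j" for j i k
    using assms that by (auto simp: PI_def)
  moreover have "blk qd x j i = blk qd y j i" if "j < m" "i < n j" for j i
    using calculation that by (auto simp: blk_def)
  ultimately show ?thesis
    unfolding Hset_def by (intro Collect_cong) (simp cong: conj_cong)
qed

lemma Fbold_eq_Fop:
  assumes f_dep: "\<forall>j<m. \<forall>i<n j. \<forall>x y. (\<forall>p\<in>PI m n qd. x p = y p) \<longrightarrow> f j i x = f j i y"
    and cons: "\<forall>(a, p)\<in>EI m n qd. xh a p = xs p" and "p \<in> PI m n qd"
  shows "Fbold n f xh p = Fop n f xs p"
proof -
  obtain j i k where p: "p = (j, i, k)" "j < m" "i < n j"
    using \<open>p \<in> PI m n qd\<close> by (cases p) (auto simp: PI_def)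
  have "estpt xh j i' q = xs q" if "i' < n j" "q \<in> PI m n qd" for i' q
    using cons that p by (cases q) (auto simp: estpt_def EI_def Ag_def PI_def)
  then have "f j i' ((estpt xh j i')(p := estpt xh j i' p + t)) = f j i' (xs(p := xs p + t))"
    if "i' < n j" for i' t
    using f_dep p that \<open>p \<in> PI m n qd\<close> by simp
  then have "pd (f j i') (estpt xh j i') p = pd (f j i') xs p" if "i' < n j" for i'
    using that unfolding pd_def by presburger
  then show ?thesis
    by (simp add: p Fbold_def Fop_def)
qed

lemma Rop_eq_consensus:
  assumes "\<forall>(a, p)\<in>EI m n qd. xh a p = xs p" "p \<in> PI m n qd"
  shows "Rop xh p = xs p"
  using assms by (cases p) (auto simp: Rop_def EI_def Ag_def PI_def)

lemma RT_cong:
  assumes "(a, p) \<in> EI m n qd" "\<forall>q\<in>PI m n qd. u q = v q"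
  shows "RT u a p = RT v a p"
  using assms by (cases a; cases p) (auto simp: RT_def EI_def)

lemma RT_owner: "RT u (fst p, fst (snd p)) p = u p"
  by (cases p) (simp add: RT_def)

lemma owner_in_EI: "p \<in> PI m n qd \<Longrightarrow> ((fst p, fst (snd p)), p) \<in> EI m n qd"
  by (cases p) (simp add: EI_def Ag_def PI_def)

lemma Lop_cong:
  assumes "\<forall>p\<in>PI m n qd. x p = y p" "p \<in> PI m n qd"
  shows "Lop n W x p = Lop n W y p"
  using assms by (cases p) (auto simp: Lop_def PI_def)

lemma LopT_eq_Lop:
  assumes "\<forall>j<m. ugraph (n j) (W j)" "p \<in> PI m n qd"
  shows "LopT n W v p = Lop n W v p"
  using assms by (cases p) (auto simp: LopT_def Lop_def PI_def lap_sym intro!: sum.cong)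

lemma Aop_cong:
  assumes "\<forall>p\<in>PI m n qd. x p = y p" "\<forall>j<m. 0 < n j"
  shows "Aop m qd A x r = Aop m qd A y r"
  using assms by (auto simp: Aop_def PI_def intro!: sum.cong)

lemma LamT_eq_AT:
  assumes "\<forall>(j, r)\<in>CW m w. mu (j, r) = u r" "p \<in> PI m n qd"
  shows "LamT w A mu p = AT w A u p"
  using assms by (cases p) (auto simp: LamT_def AT_def CW_def PI_def intro!: sum.cong)

lemma RT_add: "RT (\<lambda>q. u q + v q) a p = RT u a p + RT v a p"
  by (cases a; cases p) (simp add: RT_def)

lemma multipliers_consensus:
  assumes "ugraph m WL" "graph_connected m WL" "0 < m" and "\<forall>cr\<in>CW m w. L0op m WL mu cr = 0"
  shows "\<forall>(j, r)\<in>CW m w. mu (j, r) = mu (0, r)"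
proof (clarsimp simp: CW_def)
  fix j r assume "j < m" "r < w"
  moreover have "\<forall>i<m. (\<Sum>l<m. lap m WL i l * mu (l, r)) = 0"
    using assms(4) \<open>r < w\<close> by (auto simp: CW_def L0op_def)
  ultimately show "mu (j, r) = mu (0, r)"
    using lap_kernel_const[OF assms(1,2), of "\<lambda>l. mu (l, r)" j 0] assms(3) by simp
qed

lemma extended_stationarity:
  assumes graphs: "\<forall>j<m. ugraph (n j) (W j)" and nonempty: "\<forall>j<m. 0 < n j"
    and cons: "\<forall>(a, p)\<in>EI m n qd. xh a p = xs p"
    and eq: "\<forall>(a, p)\<in>EI m n qd. RT u a p + c * (Lhat n W xh a p + L0hat m WL xh a p)
      + RT (LopT n W lam) a p + RT t a p + RT g a p = 0"
  shows "\<forall>(a, p)\<in>EI m n qd. RT u a p + RT g a p + RT (Lop n W lam) a p + RT t a p = 0"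
proof (clarify)
  fix a p assume ap: "(a, p) \<in> EI m n qd"
  obtain j i where a: "a = (j, i)" "j < m" "i < n j"
    using ap by (auto simp: EI_def Ag_def)
  have "Lhat n W xh a p + L0hat m WL xh a p = 0"
    using a ap cons nonempty mc_lap_const[where u = "\<lambda>j i. xh (j, i) p" and c = "xs p"]
    by (auto simp: EI_def Ag_def Lhat_L0hat_eq_mc_lap)
  moreover have "RT (LopT n W lam) a p = RT (Lop n W lam) a p"
    using ap LopT_eq_Lop[OF graphs] by (intro RT_cong) auto
  ultimately show "RT u a p + RT g a p + RT (Lop n W lam) a p + RT t a p = 0"
    using eq ap by fastforce
qed

lemma stationarity_of_extended:
  assumes f_dep: "\<forall>j<m. \<forall>i<n j. \<forall>x y. (\<forall>p\<in>PI m n qd. x p = y p) \<longrightarrow> f j i x = f j i y"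
    and cons: "\<forall>(a, p)\<in>EI m n qd. xh a p = xs p"
    and mu_cons: "\<forall>(j, r)\<in>CW m w. mu (j, r) = u r"
    and eq: "\<forall>(a, p)\<in>EI m n qd.
      RT (Fbold n f xh) a p + RT g a p + RT (Lop n W lam) a p + RT (LamT w A mu) a p = 0"
  shows "\<forall>p\<in>PI m n qd. Fop n f xs p + g p + Lop n W lam p + AT w A u p = 0"
proof
  fix p assume p: "p \<in> PI m n qd"
  then show "Fop n f xs p + g p + Lop n W lam p + AT w A u p = 0"
    using eq owner_in_EI[OF p] Fbold_eq_Fop[OF f_dep cons p] LamT_eq_AT[OF mu_cons p]
    by (fastforce simp: RT_owner)
qed

lemma sum_leader_equations:
  assumes "ugraph m WL"
    and "\<forall>cr\<in>CW m w. - Lamop qd A x cr - L0op m WL z cr + b (fst cr) (snd cr) + v cr = 0" "r < w"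
  shows "bsum m b r - Aop m qd A x r + (\<Sum>j<m. v (j, r)) = 0"
proof -
  have "(\<Sum>j<m. - Lamop qd A x (j, r) - L0op m WL z (j, r) + b j r + v (j, r)) = 0"
    using assms(2,3) by (auto simp: CW_def intro!: sum.neutral)
  moreover have "(\<Sum>j<m. L0op m WL z (j, r)) = 0"
    using sum_lap_mult_eq_0[OF assms(1)] by (simp add: L0op_def)
  ultimately show ?thesis
    by (simp add: sum.distrib sum_subtractf sum_negf bsum_def Aop_def Lamop_def)
qed

section \<open>Normal cones of the nonnegative orthant\<close>

lemma normal_cone_orthant_iff:
  assumes "finite I"
  shows "v \<in> normal_cone I (orthant I) u \<longleftrightarrow>
    (\<forall>a\<in>I. 0 \<le> u a \<and> v a \<le> 0) \<and> (\<Sum>a\<in>I. v a * u a) = 0"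
proof
  assume v: "v \<in> normal_cone I (orthant I) u"
  then have u: "\<forall>a\<in>I. 0 \<le> u a" and
    cone: "\<And>y. \<forall>a\<in>I. 0 \<le> y a \<Longrightarrow> (\<Sum>a\<in>I. v a * (y a - u a)) \<le> 0"
    by (auto simp: normal_cone_def orthant_def)
  have "v a \<le> 0" if "a \<in> I" for a
  proof -
    have "(\<Sum>b\<in>I. v b * ((u(a := u a + 1)) b - u b)) = (\<Sum>b\<in>I. if b = a then v a else 0)"
      by (rule sum.cong) auto
    also have "\<dots> = v a"
      using assms that by simp
    finally have "(\<Sum>b\<in>I. v b * ((u(a := u a + 1)) b - u b)) = v a" .
    then show ?thesis
      using cone[of "u(a := u a + 1)"] u by force
  qed
  moreover have "(\<Sum>a\<in>I. v a * u a) \<ge> 0"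
    using cone[of "\<lambda>_. 0"] by (simp add: sum_negf)
  moreover have "(\<Sum>a\<in>I. v a * u a) \<le> 0"
    using cone[of "\<lambda>a. 2 * u a"] u by simp
  ultimately show "(\<forall>a\<in>I. 0 \<le> u a \<and> v a \<le> 0) \<and> (\<Sum>a\<in>I. v a * u a) = 0"
    using u by auto
next
  assume "(\<forall>a\<in>I. 0 \<le> u a \<and> v a \<le> 0) \<and> (\<Sum>a\<in>I. v a * u a) = 0"
  then show "v \<in> normal_cone I (orthant I) u"
    by (auto simp: normal_cone_def orthant_def right_diff_distrib sum_subtractf
        intro!: sum_nonpos mult_nonpos_nonneg)
qed

lemma normal_cone_orthant_sum_clusters:
  assumes v: "v \<in> normal_cone (CW m w) (orthant (CW m w)) mu"
    and cons: "\<forall>(j, r)\<in>CW m w. mu (j, r) = u r" and "0 < m"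
  shows "(\<lambda>r. \<Sum>j<m. v (j, r)) \<in> normal_cone {..<w} (orthant {..<w}) u"
proof -
  have CW: "CW m w = {..<m} \<times> {..<w}"
    by (auto simp: CW_def)
  have "(\<forall>c\<in>CW m w. 0 \<le> mu c \<and> v c \<le> 0) \<and> (\<Sum>c\<in>CW m w. v c * mu c) = 0"
    using v normal_cone_orthant_iff[of "CW m w"] by (simp add: CW)
  moreover have "(\<Sum>c\<in>CW m w. v c * mu c) = (\<Sum>j<m. \<Sum>r<w. v (j, r) * u r)"
    using cons by (auto simp: CW sum.cartesian_product intro!: sum.cong)
  ultimately have v': "\<forall>j<m. \<forall>r<w. 0 \<le> u r \<and> v (j, r) \<le> 0" "(\<Sum>j<m. \<Sum>r<w. v (j, r) * u r) = 0"
    using cons by (auto simp: CW)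
  have "(\<Sum>r<w. (\<Sum>j<m. v (j, r)) * u r) = 0"
    using v'(2) by (simp add: sum_distrib_right sum.swap[of _ "{..<w}"])
  moreover have "\<forall>r<w. 0 \<le> u r \<and> (\<Sum>j<m. v (j, r)) \<le> 0"
    using v'(1) \<open>0 < m\<close> by (auto intro: sum_nonpos)
  ultimately show ?thesis
    by (simp add: normal_cone_orthant_iff)
qed

section \<open>KKT points solve the GVI\<close>

definition cluster_consensus :: "nat \<Rightarrow> (nat \<Rightarrow> nat) \<Rightarrow> (nat \<Rightarrow> nat) \<Rightarrow> prof \<Rightarrow> bool" where
  "cluster_consensus m n qd x \<longleftrightarrow> (\<forall>j<m. \<forall>i<n j. \<forall>k<qd j. x (j, i, k) = x (j, 0, k))"

lemma sum_PI: "(\<Sum>p\<in>PI m n qd. F p) = (\<Sum>j<m. \<Sum>i<n j. \<Sum>k<qd j. F (j, i, k))"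
proof -
  have "PI m n qd = (SIGMA j:{..<m}. {..<n j} \<times> {..<qd j})"
    by (auto simp: PI_def)
  then show ?thesis
    by (simp add: sum.Sigma sum.cartesian_product)
qed

lemma Lop_eq_0_imp_cluster_consensus:
  assumes "\<forall>j<m. ugraph (n j) (W j)" "\<forall>j<m. graph_connected (n j) (W j)" "\<forall>j<m. 0 < n j"
    and "\<forall>p\<in>PI m n qd. Lop n W x p = 0"
  shows "cluster_consensus m n qd x"
  unfolding cluster_consensus_def
proof (intro allI impI)
  fix j i k assume "j < m" "i < n j" "k < qd j"
  moreover have "\<forall>i'<n j. (\<Sum>l<n j. lap (n j) (W j) i' l * x (j, l, k)) = 0"
    using assms(4) \<open>j < m\<close> \<open>k < qd j\<close> by (auto simp: PI_def Lop_def)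
  ultimately show "x (j, i, k) = x (j, 0, k)"
    using lap_kernel_const[of "n j" "W j" "\<lambda>l. x (j, l, k)" i 0] assms(1-3) by auto
qed

lemma cluster_consensus_blk:
  assumes "cluster_consensus m n qd x" "j < m" "i < n j" "l < n j"
  shows "blk qd x j i = blk qd x j l"
proof
  fix k
  have "x (j, i, k) = x (j, l, k)" if "k < qd j"
    using assms that unfolding cluster_consensus_def by metis
  then show "blk qd x j i k = blk qd x j l k"
    by (simp add: blk_def)
qed

text \<open>Column sums of a Laplacian vanish, so \<open>L\<lambda>\<close> is orthogonal to cluster-wise consensus.\<close>
lemma inner_Lop_cluster_consensus:
  assumes "\<forall>j<m. ugraph (n j) (W j)" "cluster_consensus m n qd d"
  shows "ip (PI m n qd) (Lop n W lam) d = 0"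
proof -
  have "(\<Sum>i<n j. \<Sum>k<qd j. Lop n W lam (j, i, k) * d (j, i, k)) = 0" if "j < m" for j
  proof -
    have "(\<Sum>i<n j. \<Sum>k<qd j. Lop n W lam (j, i, k) * d (j, i, k))
        = (\<Sum>i<n j. \<Sum>k<qd j. d (j, 0, k) * (\<Sum>l<n j. lap (n j) (W j) i l * lam (j, l, k)))"
    proof (intro sum.cong refl)
      fix i k assume "i \<in> {..<n j}" "k \<in> {..<qd j}"
      then have "d (j, i, k) = d (j, 0, k)"
        using assms(2) \<open>j < m\<close> unfolding cluster_consensus_def by blast
      then show "Lop n W lam (j, i, k) * d (j, i, k)
          = d (j, 0, k) * (\<Sum>l<n j. lap (n j) (W j) i l * lam (j, l, k))"
        by (simp add: Lop_def)
    qed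
    also have "\<dots> = (\<Sum>k<qd j. d (j, 0, k) * (\<Sum>i<n j. \<Sum>l<n j. lap (n j) (W j) i l * lam (j, l, k)))"
      by (subst sum.swap) (simp add: sum_distrib_left)
    also have "\<dots> = 0"
      using assms(1) \<open>j < m\<close> by (simp add: sum_lap_mult_eq_0)
    finally show ?thesis .
  qed
  then show ?thesis
    by (simp add: ip_def sum_PI)
qed

lemma Aop_diff: "Aop m qd A (\<lambda>p. x p - y p) r = Aop m qd A x r - Aop m qd A y r"
  by (simp add: Aop_def sum_subtractf right_diff_distrib)

lemma inner_AT:
  assumes "\<forall>j<m. 0 < n j"
  shows "ip (PI m n qd) (AT w A u) d = (\<Sum>r<w. u r * Aop m qd A d r)"
proof -
  have "(\<Sum>k<qd j. AT w A u (j, i, k) * d (j, i, k))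
      = (if i = 0 then \<Sum>k<qd j. \<Sum>r<w. A j r k * u r * d (j, 0, k) else 0)" for j i
    by (simp add: AT_def sum_distrib_right)
  then have "ip (PI m n qd) (AT w A u) d = (\<Sum>j<m. \<Sum>k<qd j. \<Sum>r<w. A j r k * u r * d (j, 0, k))"
    using assms by (simp add: ip_def sum_PI sum.delta)
  also have "\<dots> = (\<Sum>j<m. \<Sum>r<w. \<Sum>k<qd j. A j r k * u r * d (j, 0, k))"
    by (intro sum.cong refl sum.swap)
  also have "\<dots> = (\<Sum>r<w. \<Sum>j<m. \<Sum>k<qd j. A j r k * u r * d (j, 0, k))"
    by (rule sum.swap)
  also have "\<dots> = (\<Sum>r<w. u r * Aop m qd A d r)"
    by (simp add: Aop_def sum_distrib_left mult_ac)
  finally show ?thesis .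
qed

lemma Kset_cluster_consensus:
  assumes "x \<in> Kset m n qd w A b \<Omega>" "\<forall>j<m. 0 < n j"
  shows "cluster_consensus m n qd x"
  unfolding cluster_consensus_def
proof (intro allI impI)
  fix j i k assume "j < m" "i < n j" "k < qd j"
  then have "blk qd x j i = blk qd x j 0"
    using assms unfolding Kset_def by blast
  from fun_cong[OF this, of k] show "x (j, i, k) = x (j, 0, k)"
    using \<open>k < qd j\<close> by (simp add: blk_def)
qed

lemma cluster_consensus_diff:
  assumes "cluster_consensus m n qd x" "cluster_consensus m n qd y"
  shows "cluster_consensus m n qd (\<lambda>p. x p - y p)"
  unfolding cluster_consensus_def
proof (intro allI impI)
  fix j i k assume "j < m" "i < n j" "k < qd j"
  then have "x (j, i, k) = x (j, 0, k)" "y (j, i, k) = y (j, 0, k)"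
    using assms unfolding cluster_consensus_def by blast+
  then show "x (j, i, k) - y (j, i, k) = x (j, 0, k) - y (j, 0, k)"
    by simp
qed

lemma kkt_imp_Kset:
  assumes graphs: "\<forall>j<m. ugraph (n j) (W j)" and conn: "\<forall>j<m. graph_connected (n j) (W j)"
    and nonempty: "\<forall>j<m. 0 < n j"
    and g: "g \<in> Hset m n qd h \<Omega> xs"
    and v: "v \<in> normal_cone {..<w} (orthant {..<w}) u" "\<forall>r<w. bsum m b r - Aop m qd A xs r + v r = 0"
    and cons: "\<forall>p\<in>PI m n qd. Lop n W xs p = 0"
  shows "xs \<in> Kset m n qd w A b \<Omega>"
proof -
  have "\<forall>r<w. v r \<le> 0"
    using v(1) by (simp add: normal_cone_orthant_iff)
  moreover have "cluster_consensus m n qd xs"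
    using Lop_eq_0_imp_cluster_consensus[OF graphs conn nonempty cons] .
  moreover have "\<forall>j<m. \<forall>i<n j. blk qd xs j i \<in> \<Omega> j i"
    using g unfolding Hset_def by blast
  ultimately show ?thesis
    using v(2) cluster_consensus_blk[of m n qd xs] unfolding Kset_def
    by (smt (verit) mem_Collect_eq)
qed

lemma kkt_imp_GVI_sol:
  assumes graphs: "\<forall>j<m. ugraph (n j) (W j)" and conn: "\<forall>j<m. graph_connected (n j) (W j)"
    and nonempty: "\<forall>j<m. 0 < n j"
    and g: "g \<in> Hset m n qd h \<Omega> xs"
    and stat: "\<forall>p\<in>PI m n qd. F xs p + g p + Lop n W lam p + AT w A u p = 0"
    and v: "v \<in> normal_cone {..<w} (orthant {..<w}) u" "\<forall>r<w. bsum m b r - Aop m qd A xs r + v r = 0"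
    and cons: "\<forall>p\<in>PI m n qd. Lop n W xs p = 0"
  shows "GVI_sol m n qd F (Hset m n qd h \<Omega>) (Kset m n qd w A b \<Omega>) xs"
  unfolding GVI_sol_def
proof (intro conjI bexI[OF _ g] ballI)
  show xsK: "xs \<in> Kset m n qd w A b \<Omega>"
    using kkt_imp_Kset[OF graphs conn nonempty g v cons] .
  fix x assume xK: "x \<in> Kset m n qd w A b \<Omega>"
  define d where "d = (\<lambda>p. x p - xs p)"
  have "cluster_consensus m n qd d"
    unfolding d_def
    by (intro cluster_consensus_diff Kset_cluster_consensus[OF xK nonempty]
        Kset_cluster_consensus[OF xsK nonempty])
  then have "ip (PI m n qd) (Lop n W lam) d = 0"
    by (rule inner_Lop_cluster_consensus[OF graphs])
  moreover have "ip (PI m n qd) (\<lambda>p. F xs p + g p) d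
      = ip (PI m n qd) (\<lambda>p. - Lop n W lam p - AT w A u p) d"
    unfolding ip_def
  proof (intro sum.cong refl)
    fix p assume "p \<in> PI m n qd"
    then have "F xs p + g p = - Lop n W lam p - AT w A u p"
      using stat by force
    then show "(F xs p + g p) * d p = (- Lop n W lam p - AT w A u p) * d p"
      by simp
  qed
  then have "ip (PI m n qd) (\<lambda>p. F xs p + g p) d
      = - ip (PI m n qd) (Lop n W lam) d - ip (PI m n qd) (AT w A u) d"
    by (simp add: ip_def sum_subtractf sum_negf left_diff_distrib)
  moreover have "ip (PI m n qd) (AT w A u) d = (\<Sum>r<w. u r * (Aop m qd A x r - bsum m b r))"
  proof -
    have "(\<Sum>r<w. v r * u r) = 0"
      using v(1) by (simp add: normal_cone_orthant_iff)
    moreover have "\<forall>r<w. Aop m qd A xs r = bsum m b r + v r"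
      using v(2) by force
    then have "(\<Sum>r<w. u r * Aop m qd A d r)
        = (\<Sum>r<w. u r * (Aop m qd A x r - bsum m b r) - v r * u r)"
      by (intro sum.cong refl) (simp add: d_def Aop_diff algebra_simps)
    ultimately show ?thesis
      using nonempty by (simp add: inner_AT sum_subtractf)
  qed
  moreover have "(\<Sum>r<w. u r * (Aop m qd A x r - bsum m b r)) \<le> 0"
  proof -
    have "\<forall>r<w. Aop m qd A x r \<le> bsum m b r"
      using xK unfolding Kset_def by blast
    moreover have "\<forall>r<w. 0 \<le> u r"
      using v(1) by (simp add: normal_cone_orthant_iff)
    ultimately show ?thesis
      by (auto intro!: sum_nonpos mult_nonneg_nonpos)
  qed
  ultimately show "ip (PI m n qd) (\<lambda>p. F xs p + g p) (\<lambda>p. x p - xs p) \<ge> 0"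
    by (simp add: d_def)
qed

theorem theorem2:
  fixes m w :: nat and n qd :: "nat \<Rightarrow> nat"
    and W :: "nat \<Rightarrow> nat \<Rightarrow> nat \<Rightarrow> real" and WL :: "nat \<Rightarrow> nat \<Rightarrow> real"
    and A :: "nat \<Rightarrow> nat \<Rightarrow> nat \<Rightarrow> real" and b :: "nat \<Rightarrow> nat \<Rightarrow> real"
    and f :: "nat \<Rightarrow> nat \<Rightarrow> prof \<Rightarrow> real"
    and h :: "nat \<Rightarrow> nat \<Rightarrow> (nat \<Rightarrow> real) \<Rightarrow> real"
    and \<Omega> :: "nat \<Rightarrow> nat \<Rightarrow> (nat \<Rightarrow> real) set"
    and c \<eta> \<kappa>0 \<kappa> :: real
    and \<rho> \<tau> :: "nat \<Rightarrow> nat \<Rightarrow> real" and \<sigma> \<nu> :: "nat \<Rightarrow> real"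
    and xh :: est and z :: cwvec and lam :: prof and mu :: cwvec
  assumes dims: "m \<ge> 1" "w \<ge> 1" "\<forall>j<m. n j \<ge> 1 \<and> qd j \<ge> 1"
    and graphs: "\<forall>j<m. ugraph (n j) (W j)" "ugraph m WL"
    \<comment> \<open>(A1)\<close>
    and f_dep: "\<forall>j<m. \<forall>i<n j. \<forall>x y. (\<forall>p\<in>PI m n qd. x p = y p) \<longrightarrow> f j i x = f j i y"
    and f_convex: "\<forall>j<m. \<forall>i<n j. \<forall>x y t. (\<forall>p. fst p \<noteq> j \<longrightarrow> x p = y p) \<longrightarrow> 0 \<le> t \<longrightarrow> t \<le> 1 \<longrightarrow>
        f j i (\<lambda>p. t * x p + (1 - t) * y p) \<le> t * f j i x + (1 - t) * f j i y"
    and f_diff: "\<forall>j<m. \<forall>i<n j. \<forall>x. \<forall>p\<in>PI m n qd. fst p = j \<longrightarrow>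
        (\<lambda>t. f j i (x(p := x p + t))) differentiable (at 0)"
    and f_C1: "\<forall>j<m. \<forall>i<n j. \<forall>x. \<forall>p\<in>PI m n qd. fst p = j \<longrightarrow>
        (\<forall>\<epsilon>>0. \<exists>\<delta>>0. \<forall>y. (\<forall>p'. fst p' \<noteq> j \<longrightarrow> y p' = x p') \<longrightarrow>
            (\<forall>p'\<in>PI m n qd. fst p' = j \<longrightarrow> \<bar>y p' - x p'\<bar> < \<delta>) \<longrightarrow>
            \<bar>pd (f j i) y p - pd (f j i) x p\<bar> < \<epsilon>)"
    and h_props: "\<forall>j<m. \<forall>i<n j. \<Omega> j i \<noteq> {} \<and> \<Omega> j i \<subseteq> vec_of_dim (qd j) \<and> compact (\<Omega> j i)
        \<and> convex_set (\<Omega> j i) \<and> convex_fun_on (\<Omega> j i) (h j i) \<and> lsc_ext (\<Omega> j i) (h j i)"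
    \<comment> \<open>(A2)\<close>
    and K_nonempty: "Kset m n qd w A b \<Omega> \<noteq> {}"
    and slater: "\<exists>x\<in>Kset m n qd w A b \<Omega>. (\<forall>j<m. \<forall>i<n j. blk qd x j i \<in> rel_int (qd j) (\<Omega> j i))
        \<and> (\<forall>r<w. Aop m qd A x r < bsum m b r)"
    \<comment> \<open>(A3)\<close>
    and connected: "\<forall>j<m. graph_connected (n j) (W j)" "graph_connected m WL"
    \<comment> \<open>(A4)\<close>
    and F_strmon: "\<eta> > 0" "\<forall>x y. ip (PI m n qd) (\<lambda>p. Fop n f x p - Fop n f y p) (\<lambda>p. x p - y p)
        \<ge> \<eta> * (vnorm (PI m n qd) (\<lambda>p. x p - y p))\<^sup>2"
    and F_lip: "\<forall>x y. vnorm (PI m n qd) (\<lambda>p. Fop n f x p - Fop n f y p) \<le> \<kappa>0 * vnorm (PI m n qd) (\<lambda>p. x p - y p)"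
    \<comment> \<open>(A5)\<close>
    and GVI_exists: "\<exists>xs. GVI_sol m n qd (Fop n f) (Hset m n qd h \<Omega>) (Kset m n qd w A b \<Omega>) xs"
    \<comment> \<open>(A6)\<close>
    and Fbold_lip: "\<forall>xh1 xh2. vnorm (PI m n qd) (\<lambda>p. Fbold n f xh1 p - Fbold n f xh2 p)
        \<le> \<kappa> * vnorm (EI m n qd) (\<lambda>(a,p). xh1 a p - xh2 a p)"
    \<comment> \<open>parameters and (A7)\<close>
    and c_pos: "c > 0"
    and steps_pos: "\<forall>j<m. \<forall>i<n j. \<rho> j i > 0 \<and> \<tau> j i > 0" "\<forall>j<m. \<sigma> j > 0 \<and> \<nu> j > 0"
    and step_bound: "psi_inv_norm m n qd w \<rho> \<sigma> \<tau> \<nu> < 1 / ellA m n qd w W WL A \<kappa> c"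
    \<comment> \<open>varpi* = col(xh, z, lam, mu) is a zero of A + B\<close>
    and zer1: "\<exists>g\<in>Hset m n qd h \<Omega> (Rop xh). \<forall>(a,p)\<in>EI m n qd.
        RT (Fbold n f xh) a p + c * (Lhat n W xh a p + L0hat m WL xh a p)
        + RT (LopT n W lam) a p + RT (LamT w A mu) a p + RT g a p = 0"
    and zer2: "\<forall>cr\<in>CW m w. L0op m WL mu cr = 0"
    and zer3: "\<forall>p\<in>PI m n qd. - Lop n W (Rop xh) p = 0"
    and zer4: "\<exists>v\<in>normal_cone (CW m w) (orthant (CW m w)) mu. \<forall>cr\<in>CW m w.
        - Lamop qd A (Rop xh) cr - L0op m WL z cr + b (fst cr) (snd cr) + v cr = 0"
  shows "\<exists>xs ms.
      (\<forall>(a,p)\<in>EI m n qd. xh a p = xs p) \<and>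
      (\<forall>(j,r)\<in>CW m w. mu (j,r) = ms r) \<and>
      (\<exists>g\<in>Hset m n qd h \<Omega> (Rop xh). \<forall>(a,p)\<in>EI m n qd.
          RT (Fbold n f xh) a p + RT g a p + RT (Lop n W lam) a p + RT (LamT w A mu) a p = 0) \<and>
      (\<exists>v\<in>normal_cone {..<w} (orthant {..<w}) ms. \<forall>r<w.
          bsum m b r - Aop m qd A (Rop xh) r + v r = 0) \<and>
      (\<forall>p\<in>PI m n qd. Lop n W (Rop xh) p = 0) \<and>
      (\<exists>g\<in>Hset m n qd h \<Omega> xs. \<forall>p\<in>PI m n qd.
          Fop n f xs p + g p + Lop n W lam p + AT w A ms p = 0) \<and>
      (\<exists>v\<in>normal_cone {..<w} (orthant {..<w}) ms. \<forall>r<w.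
          bsum m b r - Aop m qd A xs r + v r = 0) \<and>
      (\<forall>p\<in>PI m n qd. Lop n W xs p = 0) \<and>
      GVI_sol m n qd (Fop n f) (Hset m n qd h \<Omega>) (Kset m n qd w A b \<Omega>) xs \<and>
      vGNE m n qd w f h \<Omega> A b xs"
proof -
  have nonempty: "\<forall>j<m. 0 < n j"
    using dims(3) by auto
  obtain g where g: "g \<in> Hset m n qd h \<Omega> (Rop xh)" and stat: "\<forall>(a, p)\<in>EI m n qd.
      RT (Fbold n f xh) a p + c * (Lhat n W xh a p + L0hat m WL xh a p)
      + RT (LopT n W lam) a p + RT (LamT w A mu) a p + RT g a p = 0"
    using zer1 by blast
  obtain v where v: "v \<in> normal_cone (CW m w) (orthant (CW m w)) mu" and leader: "\<forall>cr\<in>CW m w.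
      - Lamop qd A (Rop xh) cr - L0op m WL z cr + b (fst cr) (snd cr) + v cr = 0"
    using zer4 by blast
  define xs where "xs = xh (0, 0)"
  define ms where "ms = (\<lambda>r. mu (0, r))"
  define vs where "vs = (\<lambda>r. \<Sum>j<m. v (j, r))"
  have first_block: "\<forall>(a, p)\<in>EI m n qd. c * (Lhat n W xh a p + L0hat m WL xh a p)
      + RT (\<lambda>q. Fbold n f xh q + LopT n W lam q + LamT w A mu q + g q) a p = 0"
    using stat by (simp add: RT_add algebra_simps)
  have "xh a p = xs p" if "(a, p) \<in> EI m n qd" for a p
    unfolding xs_def using c_pos by (intro estimates_consensus[OF graphs connected nonempty _ first_block that]) simp
  then have xh_cons: "\<forall>(a, p)\<in>EI m n qd. xh a p = xs p"
    by blast
  have mu_cons: "\<forall>(j, r)\<in>CW m w. mu (j, r) = ms r"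
    using multipliers_consensus[OF graphs(2) connected(2) _ zer2] dims(1) by (simp add: ms_def)
  have Rxh: "\<forall>p\<in>PI m n qd. Rop xh p = xs p"
    using Rop_eq_consensus[OF xh_cons] by blast
  have ext_stat: "\<forall>(a, p)\<in>EI m n qd.
      RT (Fbold n f xh) a p + RT g a p + RT (Lop n W lam) a p + RT (LamT w A mu) a p = 0"
    using extended_stationarity[OF graphs(1) nonempty xh_cons stat] .
  have gxs: "g \<in> Hset m n qd h \<Omega> xs"
    using g Hset_cong[OF Rxh] by simp
  have stat_xs: "\<forall>p\<in>PI m n qd. Fop n f xs p + g p + Lop n W lam p + AT w A ms p = 0"
    using stationarity_of_extended[OF f_dep xh_cons mu_cons ext_stat] .
  have vs: "vs \<in> normal_cone {..<w} (orthant {..<w}) ms"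
    using normal_cone_orthant_sum_clusters[OF v mu_cons] dims(1) by (simp add: vs_def)
  have leader_Rxh: "\<forall>r<w. bsum m b r - Aop m qd A (Rop xh) r + vs r = 0"
    using sum_leader_equations[OF graphs(2) leader] by (simp add: vs_def)
  then have leader_xs: "\<forall>r<w. bsum m b r - Aop m qd A xs r + vs r = 0"
    using Aop_cong[OF Rxh nonempty] by simp
  have lap_xs: "\<forall>p\<in>PI m n qd. Lop n W xs p = 0"
    using zer3 Lop_cong[OF Rxh] by simp
  have "GVI_sol m n qd (Fop n f) (Hset m n qd h \<Omega>) (Kset m n qd w A b \<Omega>) xs"
    by (rule kkt_imp_GVI_sol[where F = "Fop n f",
          OF graphs(1) connected(1) nonempty gxs stat_xs vs leader_xs lap_xs])
  then show ?thesis
    using xh_cons mu_cons g ext_stat vs leader_Rxh zer3 gxs stat_xs leader_xs lap_xs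
    by (auto simp: vGNE_def)
qed

end
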